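(* Let $q$ be an odd prime power, $f$ a normal planar function on $\mathbb F_{q^2}$, and $\theta\in\mathbb F_{q^2}^*$ such that for every $c\in\mathbb F_q$, $\#\{x\in\mathbb F_{q^2}:\theta_1f_0(x)-\theta_0f_1(x)=c\}$ equals $q+1$ if $c\neq0$ and $1$ if $c=0$, so that $\mathcal U_\theta:=\{(x,t\theta):x\in\mathbb F_{q^2},t\in\mathbb F_q\}\cup\{(\infty)\}$ is a unital in $\Pi(f)$. Then in $\mathcal U_\theta$ the point $(\infty)$ is a vertex of Wilbrink's condition II in strong form.
   Context: A function $f:\mathbb F_{q^2}\to\mathbb F_{q^2}$ is planar if for every $a\neq0$ the map $x\mapsto f(x+a)-f(x)$ is a bijection; it is normal if moreover $f(0)=0$ and $f(a)=f(b)$ iff $a=\pm b$. For planar $f$, $\Pi(f)$ is the projective plane with points $(x,y)\in\mathbb F_{q^2}^2$ and $(a)$ for $a\in\mathbb F_{q^2}\cup\{\infty\}$, lines $L_{a,b}=\{(x,f(x+a)-b):x\in\mathbb F_{q^2}\}\cup\{(a)\}$, $N_a=\{(a,y):y\in\mathbb F_{q^2}\}\cup\{(\infty)\}$ ($a,b\in\mathbb F_{q^2}$), $L_\infty=\{(a):a\in\mathbb F_{q^2}\cup\{\infty\}\}$. A fixed $\xi\in\mathbb F_{q^2}\setminus\mathbb F_q$ is chosen; $\theta=\theta_0+\theta_1\xi$, $f(x)=f_0(x)+f_1(x)\xi$ with components in $\mathbb F_q$. A unital (set of $q^3+1$ points meeting every line in $1$ or $q+1$ points) is regarded as a design whose blocks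 are its intersections with lines meeting it in $q+1$ points. A point $v$ of the unital is a vertex of Wilbrink's condition II in strong form if for every block $B$ with $v\notin B$, every block $C$ with $v\in C$ meeting $B$, and every point $w\in C$ distinct from $v$ and from the point of $B\cap C$, there exists a block $B'\neq C$ with $w\in B'$ such that $B'$ meets every block that contains $v$ and meets $B$. *)

theory Defs
  imports "HOL-Computational_Algebra.Primes"
begin

text \<open>Points of the projective plane Pi(f): affine points (x,y) and points at
infinity (a), where None stands for (infinity) and Some a for a in F_{q^2}.\<close>
datatype 'a point = Aff 'a 'a | Inf "'a option"

definition odd_prime_power :: "nat \<Rightarrow> bool" where
  "odd_prime_power q \<longleftrightarrow> odd q \<and> (\<exists>p k. prime p \<and> k > 0 \<and> q = p ^ k)"

definition Fq :: "nat \<Rightarrow> 'a::field set" where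
  "Fq q = {x. x ^ q = x}"

definition planar :: "('a::field \<Rightarrow> 'a) \<Rightarrow> bool" where
  "planar f \<longleftrightarrow> (\<forall>a. a \<noteq> 0 \<longrightarrow> bij (\<lambda>x. f (x + a) - f x))"

definition normal_planar :: "('a::field \<Rightarrow> 'a) \<Rightarrow> bool" where
  "normal_planar f \<longleftrightarrow> planar f \<and> f 0 = 0 \<and> (\<forall>a b. f a = f b \<longleftrightarrow> a = b \<or> a = - b)"

definition comp :: "nat \<Rightarrow> 'a::field \<Rightarrow> 'a \<Rightarrow> 'a \<times> 'a" where
  "comp q \<xi> y = (THE (a, b). a \<in> Fq q \<and> b \<in> Fq q \<and> y = a + b * \<xi>)"

definition comp0 :: "nat \<Rightarrow> 'a::field \<Rightarrow> 'a \<Rightarrow> 'a" where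
  "comp0 q \<xi> y = fst (comp q \<xi> y)"

definition comp1 :: "nat \<Rightarrow> 'a::field \<Rightarrow> 'a \<Rightarrow> 'a" where
  "comp1 q \<xi> y = snd (comp q \<xi> y)"

definition line_L :: "('a::field \<Rightarrow> 'a) \<Rightarrow> 'a \<Rightarrow> 'a \<Rightarrow> 'a point set" where
  "line_L f a b = {Aff x (f (x + a) - b) | x. True} \<union> {Inf (Some a)}"

definition line_N :: "'a \<Rightarrow> 'a point set" where
  "line_N a = {Aff a y | y. True} \<union> {Inf None}"

definition line_inf :: "'a point set" where
  "line_inf = range Inf"

definition plane_lines :: "('a::field \<Rightarrow> 'a) \<Rightarrow> 'a point set set" where
  "plane_lines f = {line_L f a b | a b. True} \<union> {line_N a | a. True} \<union> {line_inf}"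

definition U_theta :: "nat \<Rightarrow> 'a::field \<Rightarrow> 'a point set" where
  "U_theta q \<theta> = {Aff x (t * \<theta>) | x t. t \<in> Fq q} \<union> {Inf None}"

definition unital_blocks :: "nat \<Rightarrow> ('a::field \<Rightarrow> 'a) \<Rightarrow> 'a point set \<Rightarrow> 'a point set set" where
  "unital_blocks q f U = {U \<inter> l | l. l \<in> plane_lines f \<and> card (U \<inter> l) = q + 1}"

definition wilbrink_II_strong_vertex :: "'p set set \<Rightarrow> 'p \<Rightarrow> bool" where
  "wilbrink_II_strong_vertex Bs v \<longleftrightarrow>
     (\<forall>B\<in>Bs. v \<notin> B \<longrightarrow>
       (\<forall>C\<in>Bs. v \<in> C \<longrightarrow> B \<inter> C \<noteq> {} \<longrightarrow>
         (\<forall>w\<in>C. w \<noteq> v \<longrightarrow> w \<notin> B \<inter> C \<longrightarrow>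
           (\<exists>B'\<in>Bs. B' \<noteq> C \<and> w \<in> B' \<and>
              (\<forall>D\<in>Bs. v \<in> D \<longrightarrow> D \<inter> B \<noteq> {} \<longrightarrow> D \<inter> B' \<noteq> {})))))"

end

theory Submission
  imports Defs "HOL-Number_Theory.Residues"
begin

text \<open>A vertical translation (x, y) \<mapsto> (x, y + c) maps each line L_{a,b} to L_{a,b-c} and fixes
  every line through (\<infinity>), so it permutes the blocks of any point set it leaves invariant,
  fixing those through (\<infinity>); for c = s\<theta> with s in F_q it leaves U_\<theta> invariant. Given B, C
  and w as in condition II, C lies on the vertical line through w and meets B in a point p;
  translating B by the vector from p to w gives a block B' through w which meets every block
  through (\<infinity>) that B meets.\<close>

lemma CHAR_power_if_card_eq_square:
  assumes "odd_prime_power q" and "card (UNIV :: 'a::{field,finite} set) = q ^ 2"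
  shows "\<exists>k. q = CHAR('a) ^ k"
proof -
  obtain p k where p: "prime p" "q = p ^ k"
    using assms(1) unfolding odd_prime_power_def by blast
  have "prime CHAR('a)" by (simp add: prime_CHAR_semidom finite_imp_CHAR_pos)
  moreover have "CHAR('a) dvd p ^ (k * 2)"
    using CHAR_dvd_CARD[where 'a='a] assms(2) p by (simp add: power_mult)
  ultimately have "CHAR('a) = p"
    using p(1) prime_dvd_power primes_dvd_imp_eq by blast
  with p show ?thesis by blast
qed

lemma Fq_add:
  fixes s t :: "'a::field"
  assumes "prime CHAR('a)" "q = CHAR('a) ^ k" "s \<in> Fq q" "t \<in> Fq q"
  shows "s + t \<in> Fq q"
  using freshmans_dream'[OF assms(1,2), of s t] assms(3,4) by (simp add: Fq_def)

lemma Fq_uminus: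
  fixes s :: "'a::field"
  assumes "prime CHAR('a)" "q = CHAR('a) ^ k" "s \<in> Fq q"
  shows "- s \<in> Fq q"
proof -
  \<comment> \<open>Expanding (s + (- s))^q avoids any parity argument, so characteristic 2 is included.\<close>
  have "q > 0" using assms(1,2) by (simp add: prime_gt_0_nat)
  then have "0 = s ^ q + (- s) ^ q"
    using freshmans_dream'[OF assms(1,2), of s "- s"] by (simp add: power_0_left)
  then show ?thesis using assms(3) by (simp add: Fq_def eq_neg_iff_add_eq_0 add.commute)
qed

lemma Fq_diff:
  fixes s t :: "'a::field"
  assumes "prime CHAR('a)" "q = CHAR('a) ^ k" "s \<in> Fq q" "t \<in> Fq q"
  shows "s - t \<in> Fq q"
  using Fq_add[OF assms(1,2,3) Fq_uminus[OF assms(1,2,4)]] by simp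

definition vertical_shift :: "'a::field \<Rightarrow> 'a point \<Rightarrow> 'a point" where
  "vertical_shift c P = (case P of Aff x y \<Rightarrow> Aff x (y + c) | Inf z \<Rightarrow> Inf z)"

lemma vertical_shift_simps [simp]:
  "vertical_shift c (Aff x y) = Aff x (y + c)"
  "vertical_shift c (Inf z) = Inf z"
  by (simp_all add: vertical_shift_def)

lemma inj_vertical_shift: "inj (vertical_shift c)"
  by (auto simp: inj_def vertical_shift_def split: point.splits)

lemma Inf_in_vertical_shift_image_iff [simp]:
  "Inf z \<in> vertical_shift c ` A \<longleftrightarrow> Inf z \<in> A"
  by (metis inj_image_mem_iff inj_vertical_shift vertical_shift_simps(2))

lemma vertical_shift_line_L: "vertical_shift c ` line_L f a b = line_L f a (b - c)"
  by (force simp: line_L_def)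

lemma vertical_shift_line_N: "vertical_shift c ` line_N a = line_N a"
proof -
  have "vertical_shift c ` range (Aff a) = Aff a ` range (\<lambda>y. y + c)"
    by (simp only: image_image vertical_shift_simps)
  also have "\<dots> = range (Aff a)" by simp
  finally have "vertical_shift c ` range (Aff a) = range (Aff a)" .
  moreover have "line_N a = range (Aff a) \<union> {Inf None}" by (auto simp: line_N_def)
  ultimately show ?thesis by simp
qed

lemma vertical_shift_line_inf: "vertical_shift c ` line_inf = line_inf"
  by (auto simp: line_inf_def image_image)

lemma vertical_shift_plane_line:
  assumes "l \<in> plane_lines f"
  shows "vertical_shift c ` l \<in> plane_lines f"
proof -
  consider a b where "l = line_L f a b" | a where "l = line_N a" | "l = line_inf"
    using assms by (auto simp: plane_lines_def)
  then show ?thesis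
    by cases (auto simp: plane_lines_def vertical_shift_line_L vertical_shift_line_N
        vertical_shift_line_inf)
qed

lemma plane_line_through_Inf_None_Aff:
  assumes "l \<in> plane_lines f" "Inf None \<in> l" "Aff x y \<in> l"
  shows "l = line_N x"
  using assms by (auto simp: plane_lines_def line_L_def line_N_def line_inf_def)

lemma vertical_shift_U_theta:
  fixes \<theta> s :: "'a::field"
  assumes "prime CHAR('a)" "q = CHAR('a) ^ k" "s \<in> Fq q"
  shows "vertical_shift (s * \<theta>) ` U_theta q \<theta> = U_theta q \<theta>"
proof (intro equalityI subsetI)
  fix P assume "P \<in> vertical_shift (s * \<theta>) ` U_theta q \<theta>"
  then obtain P0 where P0: "P0 \<in> U_theta q \<theta>" "P = vertical_shift (s * \<theta>) P0" by blast
  show "P \<in> U_theta q \<theta>"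
  proof (cases "P0 = Inf None")
    case False
    with P0(1) obtain x t where "P0 = Aff x (t * \<theta>)" "t \<in> Fq q"
      by (auto simp: U_theta_def)
    with P0(2) have "P = Aff x ((t + s) * \<theta>)" by (simp add: algebra_simps)
    moreover have "t + s \<in> Fq q" using Fq_add[OF assms(1,2) \<open>t \<in> Fq q\<close> assms(3)] .
    ultimately show ?thesis by (auto simp: U_theta_def)
  qed (use P0 in \<open>simp add: U_theta_def\<close>)
next
  fix P assume P: "P \<in> U_theta q \<theta>"
  show "P \<in> vertical_shift (s * \<theta>) ` U_theta q \<theta>"
  proof (cases "P = Inf None")
    case False
    with P obtain x t where "P = Aff x (t * \<theta>)" "t \<in> Fq q"
      by (auto simp: U_theta_def)
    then have "P = vertical_shift (s * \<theta>) (Aff x ((t - s) * \<theta>))"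
      by (simp add: algebra_simps)
    moreover have "Aff x ((t - s) * \<theta>) \<in> U_theta q \<theta>"
      using Fq_diff[OF assms(1,2) \<open>t \<in> Fq q\<close> assms(3)] by (auto simp: U_theta_def)
    ultimately show ?thesis by blast
  qed (use P in \<open>simp add: U_theta_def\<close>)
qed

lemma vertical_shift_Int:
  "vertical_shift c ` U = U \<Longrightarrow> vertical_shift c ` (U \<inter> l) = U \<inter> vertical_shift c ` l"
  by (simp add: image_Int[OF inj_vertical_shift])

lemma vertical_shift_unital_block:
  assumes "vertical_shift c ` U = U" "B \<in> unital_blocks q f U"
  shows "vertical_shift c ` B \<in> unital_blocks q f U"
proof -
  obtain l where l: "l \<in> plane_lines f" "B = U \<inter> l" "card (U \<inter> l) = q + 1"
    using assms(2) by (auto simp: unital_blocks_def)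
  have "card (vertical_shift c ` B) = q + 1"
    using l(2,3) by (simp add: card_image[OF inj_on_subset[OF inj_vertical_shift subset_UNIV]])
  then show ?thesis
    using vertical_shift_plane_line[OF l(1)] vertical_shift_Int[OF assms(1)] l(2)
    by (auto simp: unital_blocks_def)
qed

lemma vertical_shift_block_through_Inf_None:
  assumes "vertical_shift c ` U = U" "D \<in> unital_blocks q f U" "Inf None \<in> D" "Aff x y \<in> D"
  shows "vertical_shift c ` D = D"
proof -
  obtain l where l: "l \<in> plane_lines f" "D = U \<inter> l"
    using assms(2) by (auto simp: unital_blocks_def)
  then have "l = line_N x"
    using assms(3,4) plane_line_through_Inf_None_Aff by blast
  then show ?thesis
    using l(2) by (simp add: vertical_shift_Int[OF assms(1)] vertical_shift_line_N)
qed

lemma unital_block_subset: "B \<in> unital_blocks q f U \<Longrightarrow> B \<subseteq> U"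
  by (auto simp: unital_blocks_def)

lemma wilbrink_II_strong_vertex_Inf_None:
  assumes Inf_in_U: "\<And>z. Inf z \<in> U \<Longrightarrow> z = None"
    and shift_invariant: "\<And>x y y'. Aff x y \<in> U \<Longrightarrow> Aff x y' \<in> U \<Longrightarrow> vertical_shift (y' - y) ` U = U"
  shows "wilbrink_II_strong_vertex (unital_blocks q f U) (Inf None)"
  unfolding wilbrink_II_strong_vertex_def
proof (intro ballI impI)
  let ?Bs = "unital_blocks q f U"
  have affine: "\<exists>x y. P = Aff x y" if "P \<in> U" "P \<noteq> Inf None" for P
    using that Inf_in_U by (cases P) auto
  fix B C w
  assume B: "B \<in> ?Bs" "Inf None \<notin> B" and C: "C \<in> ?Bs" "Inf None \<in> C" "B \<inter> C \<noteq> {}"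
    and w: "w \<in> C" "w \<noteq> Inf None"
  obtain x y where w_eq: "w = Aff x y"
    using affine unital_block_subset[OF C(1)] w by blast
  obtain p where p: "p \<in> B" "p \<in> C" using C(3) by blast
  obtain x' y' where p_eq: "p = Aff x' y'"
    using affine unital_block_subset[OF B(1)] p(1) B(2) by blast
  obtain l where l: "l \<in> plane_lines f" "C = U \<inter> l"
    using C(1) by (auto simp: unital_blocks_def)
  then have "l = line_N x"
    using plane_line_through_Inf_None_Aff C(2) w(1) w_eq by blast
  then have "x' = x" using l(2) p(2) p_eq by (auto simp: line_N_def)
  define \<sigma> where "\<sigma> = vertical_shift (y - y')"
  have "Aff x y' \<in> U" "Aff x y \<in> U"
    using unital_block_subset[OF C(1)] p(2) w(1) p_eq w_eq \<open>x' = x\<close> by auto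
  then have U_inv: "\<sigma> ` U = U" unfolding \<sigma>_def by (rule shift_invariant)
  show "\<exists>B'\<in>?Bs. B' \<noteq> C \<and> w \<in> B' \<and> (\<forall>D\<in>?Bs. Inf None \<in> D \<longrightarrow> D \<inter> B \<noteq> {} \<longrightarrow> D \<inter> B' \<noteq> {})"
  proof (intro bexI conjI ballI impI)
    show "\<sigma> ` B \<in> ?Bs"
      using U_inv B(1) unfolding \<sigma>_def by (rule vertical_shift_unital_block)
    have "Inf None \<notin> \<sigma> ` B" using B(2) by (simp add: \<sigma>_def)
    then show "\<sigma> ` B \<noteq> C" using C(2) by blast
    have "\<sigma> p = w" by (simp add: \<sigma>_def p_eq w_eq \<open>x' = x\<close>)
    then show "w \<in> \<sigma> ` B" using p(1) by blast
  next
    fix D assume D: "D \<in> ?Bs" "Inf None \<in> D" "D \<inter> B \<noteq> {}"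
    then obtain P where P: "P \<in> D" "P \<in> B" by blast
    then obtain x'' y'' where "Aff x'' y'' \<in> D"
      using affine unital_block_subset[OF B(1)] B(2) by blast
    then have "\<sigma> ` D = D"
      unfolding \<sigma>_def by (rule vertical_shift_block_through_Inf_None[OF U_inv[unfolded \<sigma>_def] D(1,2)])
    then show "D \<inter> \<sigma> ` B \<noteq> {}" using P by blast
  qed
qed

lemma U_theta_shift_invariant:
  fixes \<theta> y y' :: "'a::field"
  assumes "prime CHAR('a)" "q = CHAR('a) ^ k"
    and "Aff x y \<in> U_theta q \<theta>" "Aff x y' \<in> U_theta q \<theta>"
  shows "vertical_shift (y' - y) ` U_theta q \<theta> = U_theta q \<theta>"
proof -
  obtain t t' where "t \<in> Fq q" "t' \<in> Fq q" "y = t * \<theta>" "y' = t' * \<theta>"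
    using assms(3,4) by (auto simp: U_theta_def)
  then show ?thesis
    using vertical_shift_U_theta[OF assms(1,2) Fq_diff[OF assms(1,2)], of t' t \<theta>]
    by (simp add: algebra_simps)
qed

theorem proposition3p8:
  fixes f :: "'a::{field,finite} \<Rightarrow> 'a" and q :: nat and \<xi> \<theta> :: 'a
  assumes "odd_prime_power q"
    and "card (UNIV :: 'a set) = q ^ 2"
    and "\<xi> \<notin> Fq q"
    and "normal_planar f"
    and "\<theta> \<noteq> 0"
    and "\<forall>c\<in>Fq q.
           card {x. comp1 q \<xi> \<theta> * comp0 q \<xi> (f x) - comp0 q \<xi> \<theta> * comp1 q \<xi> (f x) = c}
             = (if c \<noteq> 0 then q + 1 else 1)"
  shows "wilbrink_II_strong_vertex (unital_blocks q f (U_theta q \<theta>)) (Inf None)"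
proof (rule wilbrink_II_strong_vertex_Inf_None)
  obtain k where k: "q = CHAR('a) ^ k"
    using CHAR_power_if_card_eq_square[OF assms(1,2)] by blast
  have char: "prime CHAR('a)" by (simp add: prime_CHAR_semidom finite_imp_CHAR_pos)
  show "vertical_shift (y' - y) ` U_theta q \<theta> = U_theta q \<theta>"
    if "Aff x y \<in> U_theta q \<theta>" "Aff x y' \<in> U_theta q \<theta>" for x y y'
    using U_theta_shift_invariant[OF char k that] .
qed (simp add: U_theta_def)

end
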